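(* Let $Q$ be a quiver, $\mathcal A=\Lambda Q/\langle P_1,\dots,P_K\rangle$ a (completed) path algebra with relations, and $G$ a finite group with a formal dual group action $\mathfrak f$ of $G$ on $\mathcal A$. Then setting $\chi\cdot x:=\chi(\mathfrak f(x))\,x$ for each arrow $x$ of $Q$ and each $\chi\in\hat G=\mathrm{Hom}(G,U(1))$ induces a well-defined action of the character group $\hat G$ on $\mathcal A$. Moreover, if $W\in\mathcal A$ is invariant under the formal dual group action, then $W$ is invariant under this action of $\hat G$.
   Context: A formal dual group action of $G$ on $\mathcal A$ is a function $\mathfrak f$ from the set of arrows of $Q$ to $G$, extended to paths by $\mathfrak f(x_p\cdots x_1)=\mathfrak f(x_1)\cdots\mathfrak f(x_p)$ (trivial paths map to $1$), such that for each $l$ every path appearing (with nonzero coefficient) in the relation $P_l$ is mapped to the same element $g_l\in G$. An element $W\in\mathcal A$ is invariant under the formal dual group action if it has a representative in $\Lambda Q$ every term (path) of which is mapped to $1\in G$. The action of $\chi$ on a path $x_p\cdots x_1$ is $\chi(\mathfrak f(x_1))\cdots\chi(\mathfrak f(x_p))\,x_p\cdots x_1$, extended linearly. *)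

theory Defs
  imports Complex_Main "HOL-Algebra.Group"
begin

text \<open>A path is a pair (v, [x_1,...,x_p]): the arrows in order of traversal starting
at vertex v (this is the path written x_p...x_1 in the paper);
(v, []) is the trivial path e_v.\<close>

definition valid_path :: "('a \<Rightarrow> 'v) \<Rightarrow> ('a \<Rightarrow> 'v) \<Rightarrow> 'v \<times> 'a list \<Rightarrow> bool" where
  "valid_path src tgt p = (case p of (v, xs) \<Rightarrow>
      (xs \<noteq> [] \<longrightarrow> src (hd xs) = v) \<and>
      (\<forall>i. Suc i < length xs \<longrightarrow> tgt (xs ! i) = src (xs ! Suc i)))"

definition path_end :: "('a \<Rightarrow> 'v) \<Rightarrow> 'v \<times> 'a list \<Rightarrow> 'v" where
  "path_end tgt p = (case p of (v, xs) \<Rightarrow> if xs = [] then v else tgt (last xs))"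

text \<open>If completed, arbitrary (formal infinite) sums are allowed;
otherwise the support must be finite (ordinary path algebra).\<close>

definition path_alg :: "('a \<Rightarrow> 'v) \<Rightarrow> ('a \<Rightarrow> 'v) \<Rightarrow> bool \<Rightarrow> ('v \<times> 'a list \<Rightarrow> complex) set" where
  "path_alg src tgt completed =
     {X. (\<forall>p. \<not> valid_path src tgt p \<longrightarrow> X p = 0) \<and>
         (\<not> completed \<longrightarrow> finite {p. X p \<noteq> 0})}"

text \<open>Multiplication (concatenation of paths, q * r = "q after r", extended bilinearly).\<close>

definition pmult :: "('a \<Rightarrow> 'v) \<Rightarrow> ('a \<Rightarrow> 'v) \<Rightarrow> ('v \<times> 'a list \<Rightarrow> complex)
     \<Rightarrow> ('v \<times> 'a list \<Rightarrow> complex) \<Rightarrow> ('v \<times> 'a list \<Rightarrow> complex)" where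
  "pmult src tgt X Y = (\<lambda>p. case p of (v, xs) \<Rightarrow>
     if valid_path src tgt (v, xs) then
       (\<Sum>k\<le>length xs. X (path_end tgt (v, take k xs), drop k xs) * Y (v, take k xs))
     else 0)"

inductive_set gen_ideal :: "('a \<Rightarrow> 'v) \<Rightarrow> ('a \<Rightarrow> 'v) \<Rightarrow> bool \<Rightarrow> (nat \<Rightarrow> 'v \<times> 'a list \<Rightarrow> complex)
     \<Rightarrow> nat \<Rightarrow> ('v \<times> 'a list \<Rightarrow> complex) set"
  for src tgt completed P K where
  gen: "l < K \<Longrightarrow> P l \<in> gen_ideal src tgt completed P K"
| zero: "(\<lambda>p. 0) \<in> gen_ideal src tgt completed P K"
| add: "X \<in> gen_ideal src tgt completed P K \<Longrightarrow> Y \<in> gen_ideal src tgt completed P K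
         \<Longrightarrow> (\<lambda>p. X p + Y p) \<in> gen_ideal src tgt completed P K"
| smult: "X \<in> gen_ideal src tgt completed P K \<Longrightarrow> (\<lambda>p. c * X p) \<in> gen_ideal src tgt completed P K"
| left: "X \<in> gen_ideal src tgt completed P K \<Longrightarrow> A \<in> path_alg src tgt completed
         \<Longrightarrow> pmult src tgt A X \<in> gen_ideal src tgt completed P K"
| right: "X \<in> gen_ideal src tgt completed P K \<Longrightarrow> A \<in> path_alg src tgt completed
         \<Longrightarrow> pmult src tgt X A \<in> gen_ideal src tgt completed P K"

text \<open>The ideal of relations: in the completed case, the closure of the generated ideal in the
arrow-ideal-adic topology; otherwise the generated ideal itself.\<close>

definition rel_ideal :: "('a \<Rightarrow> 'v) \<Rightarrow> ('a \<Rightarrow> 'v) \<Rightarrow> bool \<Rightarrow> (nat \<Rightarrow> 'v \<times> 'a list \<Rightarrow> complex)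
     \<Rightarrow> nat \<Rightarrow> ('v \<times> 'a list \<Rightarrow> complex) set" where
  "rel_ideal src tgt completed P K =
     (if completed then
        {X \<in> path_alg src tgt completed. \<forall>n. \<exists>Y \<in> gen_ideal src tgt completed P K.
             \<forall>p. length (snd p) < n \<longrightarrow> X p = Y p}
      else gen_ideal src tgt completed P K)"

text \<open>f extended to paths: f(x_p...x_1) = f(x_1)...f(x_p); trivial paths go to 1.\<close>

definition path_grp :: "('g, 'b) monoid_scheme \<Rightarrow> ('a \<Rightarrow> 'g) \<Rightarrow> 'v \<times> 'a list \<Rightarrow> 'g" where
  "path_grp G f p = foldr (\<lambda>x acc. f x \<otimes>\<^bsub>G\<^esub> acc) (snd p) \<one>\<^bsub>G\<^esub>"

definition formal_dual_action :: "('g, 'b) monoid_scheme \<Rightarrow> ('a \<Rightarrow> 'g)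
     \<Rightarrow> (nat \<Rightarrow> 'v \<times> 'a list \<Rightarrow> complex) \<Rightarrow> nat \<Rightarrow> bool" where
  "formal_dual_action G f P K =
     ((\<forall>x. f x \<in> carrier G) \<and>
      (\<forall>l<K. \<exists>g\<in>carrier G. \<forall>p. P l p \<noteq> 0 \<longrightarrow> path_grp G f p = g))"

definition character :: "('g, 'b) monoid_scheme \<Rightarrow> ('g \<Rightarrow> complex) \<Rightarrow> bool" where
  "character G \<chi> =
     ((\<forall>g\<in>carrier G. cmod (\<chi> g) = 1) \<and>
      (\<forall>g\<in>carrier G. \<forall>h\<in>carrier G. \<chi> (g \<otimes>\<^bsub>G\<^esub> h) = \<chi> g * \<chi> h))"

definition char_act :: "('a \<Rightarrow> 'g) \<Rightarrow> ('g \<Rightarrow> complex) \<Rightarrow> ('v \<times> 'a list \<Rightarrow> complex)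
     \<Rightarrow> ('v \<times> 'a list \<Rightarrow> complex)" where
  "char_act f \<chi> X = (\<lambda>p. prod_list (map (\<lambda>x. \<chi> (f x)) (snd p)) * X p)"

text \<open>W (a representative of an element of the quotient) is invariant under the formal dual
group action if some representative of the same class has all its terms mapped to 1.\<close>

definition fdga_invariant :: "('a \<Rightarrow> 'v) \<Rightarrow> ('a \<Rightarrow> 'v) \<Rightarrow> bool \<Rightarrow> (nat \<Rightarrow> 'v \<times> 'a list \<Rightarrow> complex)
     \<Rightarrow> nat \<Rightarrow> ('g, 'b) monoid_scheme \<Rightarrow> ('a \<Rightarrow> 'g) \<Rightarrow> ('v \<times> 'a list \<Rightarrow> complex) \<Rightarrow> bool" where
  "fdga_invariant src tgt completed P K G f W =
     (\<exists>W0 \<in> path_alg src tgt completed.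
        (\<lambda>p. W p - W0 p) \<in> rel_ideal src tgt completed P K \<and>
        (\<forall>p. W0 p \<noteq> 0 \<longrightarrow> path_grp G f p = \<one>\<^bsub>G\<^esub>))"

end

theory Submission
  imports Defs
begin

text \<open>Every relation \<open>P l\<close> is homogeneous for the grading of paths by \<open>G\<close> through \<open>f\<close>,
so \<open>\<chi>\<close> merely rescales it by \<open>\<chi> (g\<^sub>l)\<close>; hence the ideal generated by the relations, and its
adic closure, are stable under the rescaling \<open>x \<mapsto> \<chi>(f x) x\<close> of arrows, which is
multiplicative on paths and thus an algebra endomorphism. A representative \<open>W\<^sub>0\<close> of \<open>W\<close> with
all terms of degree \<open>\<one>\<close> is fixed by every character, so \<open>\<chi> \<cdot> W - W\<close> lies in the ideal.\<close>

lemma character_one: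
  assumes "group G" "character G \<chi>"
  shows "\<chi> \<one>\<^bsub>G\<^esub> = 1"
proof -
  interpret group G by fact
  have "\<chi> \<one>\<^bsub>G\<^esub> = \<chi> \<one>\<^bsub>G\<^esub> * \<chi> \<one>\<^bsub>G\<^esub>"
    using assms(2) unfolding character_def by (metis one_closed r_one)
  moreover have "\<chi> \<one>\<^bsub>G\<^esub> \<noteq> 0"
    using assms(2) unfolding character_def by (metis one_closed norm_zero zero_neq_one)
  ultimately show ?thesis by simp
qed

lemma path_grp_Cons: "path_grp G f (v, x # xs) = f x \<otimes>\<^bsub>G\<^esub> path_grp G f (v, xs)"
  by (simp add: path_grp_def)

lemma path_grp_Nil: "path_grp G f (v, []) = \<one>\<^bsub>G\<^esub>"
  by (simp add: path_grp_def)

lemma path_grp_closed: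
  assumes "monoid G" "\<forall>x. f x \<in> carrier G"
  shows "path_grp G f p \<in> carrier G"
proof -
  obtain v xs where "p = (v, xs)" by fastforce
  then show ?thesis
    using assms by (induction xs arbitrary: p) (simp_all add: path_grp_Nil path_grp_Cons monoid.m_closed)
qed

lemma character_path_grp:
  assumes "group G" "character G \<chi>" "\<forall>x. f x \<in> carrier G"
  shows "\<chi> (path_grp G f p) = prod_list (map (\<lambda>x. \<chi> (f x)) (snd p))"
proof -
  obtain v xs where p: "p = (v, xs)" by fastforce
  have closed: "path_grp G f (v, ys) \<in> carrier G" for ys
    using path_grp_closed[OF group.is_monoid[OF assms(1)] assms(3)] .
  show ?thesis
    unfolding p
  proof (induction xs)
    case Nil
    then show ?case using character_one[OF assms(1,2)] by (simp add: path_grp_Nil)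
  next
    case (Cons x xs)
    then show ?case
      using assms(2,3) closed unfolding character_def by (simp add: path_grp_Cons)
  qed
qed

lemma char_act_in_path_alg: "X \<in> path_alg src tgt c \<Longrightarrow> char_act f \<chi> X \<in> path_alg src tgt c"
  unfolding path_alg_def char_act_def by (auto elim!: finite_subset[rotated])

lemma char_act_add: "char_act f \<chi> (\<lambda>p. X p + Y p) = (\<lambda>p. char_act f \<chi> X p + char_act f \<chi> Y p)"
  unfolding char_act_def by (simp add: distrib_left)

lemma char_act_diff: "char_act f \<chi> (\<lambda>p. X p - Y p) = (\<lambda>p. char_act f \<chi> X p - char_act f \<chi> Y p)"
  unfolding char_act_def by (simp add: right_diff_distrib)

lemma char_act_scale: "char_act f \<chi> (\<lambda>p. c * X p) = (\<lambda>p. c * char_act f \<chi> X p)"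
  unfolding char_act_def by (simp add: mult.left_commute)

lemma char_act_pmult:
  fixes f :: "'a \<Rightarrow> 'g" and X Y :: "'v \<times> 'a list \<Rightarrow> complex"
  shows "char_act f \<chi> (pmult src tgt X Y) = pmult src tgt (char_act f \<chi> X) (char_act f \<chi> Y)"
proof
  fix p :: "'v \<times> 'a list"
  obtain v xs where p: "p = (v, xs)" by fastforce
  let ?w = "\<lambda>ys. prod_list (map (\<lambda>x. \<chi> (f x)) ys)"
  have w_split: "?w xs = ?w (drop k xs) * ?w (take k xs)" for k
    by (metis append_take_drop_id map_append prod_list.append mult.commute)
  show "char_act f \<chi> (pmult src tgt X Y) p = pmult src tgt (char_act f \<chi> X) (char_act f \<chi> Y) p"
    unfolding p char_act_def pmult_def by (auto simp: sum_distrib_left w_split intro!: sum.cong)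
qed

lemma char_act_mult_char:
  fixes f :: "'a \<Rightarrow> 'g"
  shows "char_act f (\<lambda>g. \<chi> g * \<psi> g) X = char_act f \<chi> (char_act f \<psi> X)"
proof -
  have "prod_list (map (\<lambda>x. \<chi> (f x) * \<psi> (f x)) xs)
        = prod_list (map (\<lambda>x. \<chi> (f x)) xs) * prod_list (map (\<lambda>x. \<psi> (f x)) xs)" for xs :: "'a list"
    by (induction xs) (simp_all add: algebra_simps)
  then show ?thesis unfolding char_act_def by (simp add: mult.assoc)
qed

lemma char_act_const_one:
  fixes f :: "'a \<Rightarrow> 'g"
  shows "char_act f (\<lambda>g. 1) X = X"
proof -
  have "prod_list (map (\<lambda>x. 1::complex) xs) = 1" for xs :: "'a list"
    by (induction xs) simp_all
  then show ?thesis unfolding char_act_def by simp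
qed

lemma char_act_homogeneous:
  assumes "group G" "character G \<chi>" "\<forall>x. f x \<in> carrier G"
    and "\<forall>p. X p \<noteq> 0 \<longrightarrow> path_grp G f p = g"
  shows "char_act f \<chi> X = (\<lambda>p. \<chi> g * X p)"
proof
  fix p
  show "char_act f \<chi> X p = \<chi> g * X p"
  proof (cases "X p = 0")
    case False
    then have "path_grp G f p = g" using assms(4) by blast
    then show ?thesis using character_path_grp[OF assms(1-3), of p] by (simp add: char_act_def)
  qed (simp add: char_act_def)
qed

lemma gen_ideal_diff:
  assumes "X \<in> gen_ideal src tgt c P K" "Y \<in> gen_ideal src tgt c P K"
  shows "(\<lambda>p. X p - Y p) \<in> gen_ideal src tgt c P K"
  using gen_ideal.add[OF assms(1) gen_ideal.smult[OF assms(2), of "-1"]] by simp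

lemma rel_ideal_completed_approx:
  assumes "c" "X \<in> rel_ideal src tgt c P K"
  obtains Y where "Y \<in> gen_ideal src tgt c P K" "\<forall>p. length (snd p) < n \<longrightarrow> X p = Y p"
proof -
  have "\<forall>n. \<exists>Y\<in>gen_ideal src tgt c P K. \<forall>p. length (snd p) < n \<longrightarrow> X p = Y p"
    using assms(2) by (simp add: rel_ideal_def assms(1))
  then show thesis using that by blast
qed

lemma rel_ideal_diff:
  assumes "X \<in> rel_ideal src tgt c P K" "Y \<in> rel_ideal src tgt c P K"
  shows "(\<lambda>p. X p - Y p) \<in> rel_ideal src tgt c P K"
proof (cases c)
  case True
  have "\<exists>Z\<in>gen_ideal src tgt c P K. \<forall>p. length (snd p) < n \<longrightarrow> X p - Y p = Z p" for n
  proof -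
    obtain X' where "X' \<in> gen_ideal src tgt c P K" "\<forall>p. length (snd p) < n \<longrightarrow> X p = X' p"
      using rel_ideal_completed_approx[OF True assms(1)] .
    moreover obtain Y' where "Y' \<in> gen_ideal src tgt c P K" "\<forall>p. length (snd p) < n \<longrightarrow> Y p = Y' p"
      using rel_ideal_completed_approx[OF True assms(2)] .
    ultimately show ?thesis using gen_ideal_diff by fastforce
  qed
  moreover have "(\<lambda>p. X p - Y p) \<in> path_alg src tgt c"
    using assms True unfolding rel_ideal_def path_alg_def by auto
  ultimately show ?thesis using True unfolding rel_ideal_def by simp
next
  case False
  then show ?thesis using assms gen_ideal_diff unfolding rel_ideal_def by simp
qed

lemma gen_ideal_char_act_closed:
  assumes "group G" "character G \<chi>" "formal_dual_action G f P K"
    and "X \<in> gen_ideal src tgt c P K"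
  shows "char_act f \<chi> X \<in> gen_ideal src tgt c P K"
  using assms(4)
proof (induction rule: gen_ideal.induct)
  case (gen l)
  then obtain g where "\<forall>p. P l p \<noteq> 0 \<longrightarrow> path_grp G f p = g"
    using assms(3) unfolding formal_dual_action_def by blast
  then have "char_act f \<chi> (P l) = (\<lambda>p. \<chi> g * P l p)"
    using char_act_homogeneous[OF assms(1,2)] assms(3) unfolding formal_dual_action_def by blast
  then show ?case using gen_ideal.smult[OF gen_ideal.gen[OF gen]] by simp
next
  case zero
  then show ?case using gen_ideal.zero by (simp add: char_act_def)
next
  case (add X Y)
  then show ?case using gen_ideal.add by (simp add: char_act_add)
next
  case (smult X c')
  then show ?case using gen_ideal.smult by (simp add: char_act_scale)
next
  case (left X A)
  then show ?case by (simp add: char_act_pmult char_act_in_path_alg gen_ideal.left)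
next
  case (right X A)
  then show ?case by (simp add: char_act_pmult char_act_in_path_alg gen_ideal.right)
qed

lemma rel_ideal_char_act_closed:
  assumes "group G" "character G \<chi>" "formal_dual_action G f P K"
    and "X \<in> rel_ideal src tgt c P K"
  shows "char_act f \<chi> X \<in> rel_ideal src tgt c P K"
proof (cases c)
  case True
  have "\<exists>Z\<in>gen_ideal src tgt c P K. \<forall>p. length (snd p) < n \<longrightarrow> char_act f \<chi> X p = Z p" for n
  proof -
    obtain Y where "Y \<in> gen_ideal src tgt c P K" "\<forall>p. length (snd p) < n \<longrightarrow> X p = Y p"
      using rel_ideal_completed_approx[OF True assms(4)] .
    then show ?thesis
      by (intro bexI[OF _ gen_ideal_char_act_closed[OF assms(1-3)]]) (auto simp: char_act_def)
  qed
  then show ?thesis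
    using assms(4) True char_act_in_path_alg unfolding rel_ideal_def by auto
next
  case False
  then show ?thesis using assms gen_ideal_char_act_closed unfolding rel_ideal_def by simp
qed

lemma char_act_congruent:
  assumes "group G" "character G \<chi>" "formal_dual_action G f P K"
    and "(\<lambda>p. X p - Y p) \<in> rel_ideal src tgt c P K"
  shows "(\<lambda>p. char_act f \<chi> X p - char_act f \<chi> Y p) \<in> rel_ideal src tgt c P K"
  using rel_ideal_char_act_closed[OF assms] by (simp add: char_act_diff)

lemma fdga_invariant_char_act:
  assumes "group G" "character G \<chi>" "formal_dual_action G f P K"
    and "fdga_invariant src tgt c P K G f W"
  shows "(\<lambda>p. char_act f \<chi> W p - W p) \<in> rel_ideal src tgt c P K"
proof -
  obtain W0 where diff: "(\<lambda>p. W p - W0 p) \<in> rel_ideal src tgt c P K"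
    and degree_one: "\<forall>p. W0 p \<noteq> 0 \<longrightarrow> path_grp G f p = \<one>\<^bsub>G\<^esub>"
    using assms(4) unfolding fdga_invariant_def by blast
  have fixed: "char_act f \<chi> W0 = W0"
    using char_act_homogeneous[OF assms(1,2) _ degree_one] assms(3) character_one[OF assms(1,2)]
    unfolding formal_dual_action_def by simp
  have "(\<lambda>p. (char_act f \<chi> W p - char_act f \<chi> W0 p) - (W p - W0 p)) \<in> rel_ideal src tgt c P K"
    using rel_ideal_diff[OF char_act_congruent[OF assms(1-3) diff] diff] .
  then show ?thesis by (simp add: fixed)
qed

theorem proposition7p5:
  fixes src tgt :: "'a::finite \<Rightarrow> 'v::finite"
    and G :: "('g, 'b) monoid_scheme"
    and f :: "'a \<Rightarrow> 'g"
    and P :: "nat \<Rightarrow> 'v \<times> 'a list \<Rightarrow> complex"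
    and K :: nat
    and completed :: bool
  defines "A \<equiv> path_alg src tgt completed"
    and "I \<equiv> rel_ideal src tgt completed P K"
  assumes "group G" and "finite (carrier G)"
    and "\<forall>l<K. P l \<in> A"
    and "formal_dual_action G f P K"
  shows
    "(\<forall>\<chi>. character G \<chi> \<longrightarrow>
        (\<forall>X\<in>A. char_act f \<chi> X \<in> A) \<and>
        (\<forall>X\<in>A. \<forall>Y\<in>A. char_act f \<chi> (pmult src tgt X Y)
                        = pmult src tgt (char_act f \<chi> X) (char_act f \<chi> Y)) \<and>
        (\<forall>X\<in>A. \<forall>Y\<in>A. (\<lambda>p. X p - Y p) \<in> I \<longrightarrow>
                        (\<lambda>p. char_act f \<chi> X p - char_act f \<chi> Y p) \<in> I))
     \<and> (\<forall>\<chi> \<psi>. character G \<chi> \<longrightarrow> character G \<psi> \<longrightarrow>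
          (\<forall>X\<in>A. char_act f (\<lambda>g. \<chi> g * \<psi> g) X = char_act f \<chi> (char_act f \<psi> X)))
     \<and> (\<forall>X\<in>A. char_act f (\<lambda>g. 1) X = X)
     \<and> (\<forall>W\<in>A. fdga_invariant src tgt completed P K G f W \<longrightarrow>
          (\<forall>\<chi>. character G \<chi> \<longrightarrow> (\<lambda>p. char_act f \<chi> W p - W p) \<in> I))"
  unfolding A_def I_def
  by (simp add: char_act_in_path_alg char_act_pmult char_act_mult_char char_act_const_one
      char_act_congruent[OF assms(3) _ assms(6)] fdga_invariant_char_act[OF assms(3) _ assms(6)])

end
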